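(* Let $G\subseteq W(\mathsf D_n)$ satisfy the (H1), relative minimality and minimality conditions, let $O=\{1,\dots,n'\}$ (after relabelling) be an orbit of $pr(G)$ on $\{1,\dots,n\}$, and let $\overline G_O=P_O(G)$, regarded as a subgroup of $W(\mathsf D_{n'})$ if $\sigma(g_O)=1$ for all $g\in G$ and as a subgroup of $W(\mathsf D_{n'+1})$ otherwise, acting on the corresponding lattice $\mathbb Z^{N+2}=\bigoplus_{i=-1}^{N}\mathbb Z\bar l_i$ ($N=n'$ resp. $N=n'+1$) via $\Phi$. Then $\overline G_O$ satisfies both the relative minimality condition and the (H1) condition.
   Context: For $m\ge1$, $W(\mathsf B_m)$ is the group of signed permutations of symbols $j^\pm$ ($1\le j\le m$), generated by $\mathfrak S_m$ and involutions $c_j$; elements are $c_{j_1}\cdots c_{j_t}\tau$; $pr(\cdot)=\tau$; $\sigma(\cdot)=(-1)^t$; $W(\mathsf D_m)=\ker\sigma$. Signed permutation cycles of $g$: $\beta_\gamma=(\prod_{j_i\in\mathrm{supp}\,\gamma}c_{j_i})\gamma$ for each cycle $\gamma$ of $\tau$ (fixed points included). $W(\mathsf D_m)$ acts on $\bigoplus_{i=-1}^m\mathbb Zl_i$ via $\Phi$: for $g=c_{j_1}\cdots c_{j_t}\tau$ with $s(i)=-1$ iff $i\in\{j_1,\dots,j_t\}$, $\Phi(g)l_0=l_0$, $\Phi(g)l_{-1}=l_{-1}+\frac t2l_0-\sum_{s(i)=-1}l_i$, and $\Phi(g)l_v=l_u$ or $l_0-l_u$ ($u=\tau^{-1}(v)$)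 according as $s(u)=1$ or $-1$; for $m=n$ this lattice is $\mathrm{Pic}(\bar X)$ of a standard conic bundle with $n$ degenerate fibers. A subgroup $H\subseteq W(\mathsf D_m)$ satisfies (H1) if $\mathrm H^1(H',\mathbb Z^{m+2})=0$ for all subgroups $H'\subseteq H$, and relative minimality if its invariants are $\mathbb Zl_0\oplus\mathbb ZK$, $K=-2(l_{-1}+l_0)+\sum_{i=1}^ml_i$. Minimality of $G$: $G$ corresponds to a $k$-minimal conic bundle; in particular for each $j$, $j^+$ and $j^-$ lie in one $G$-orbit. For $g\in G$, $g_O$ is the product of the signed permutation cycles of $g$ with underlying cycle in $O$, and $P_O(g)=g_Oc_{n'+1}$ if $\sigma(g_O)=-1$, $P_O(g)=g_O$ otherwise. *)

theory Defs
  imports "HOL-Combinatorics.Permutations"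
begin

text \<open>Signed permutations of the symbols j+ and j- (1 \<le> j \<le> m) are encoded as odd
  permutations of the integers: j+ is the integer j and j- is the integer -j.\<close>

definition signed_perm :: "nat \<Rightarrow> (int \<Rightarrow> int) \<Rightarrow> bool" where
  "signed_perm m f \<longleftrightarrow> f permutes ({- int m..int m} - {0}) \<and> (\<forall>x. f (- x) = - f x)"

definition WB :: "nat \<Rightarrow> (int \<Rightarrow> int) set" where
  "WB m = {f. signed_perm m f}"

definition pr :: "(int \<Rightarrow> int) \<Rightarrow> int \<Rightarrow> int" where
  "pr f = (\<lambda>i. \<bar>f i\<bar>)"

text \<open>Writing g = c_{j1}...c_{jt} tau, the set {j1,...,jt} is the set of indices
  i with s(i) = -1, i.e. those i in {1..m} sent to a negative symbol
  (products are composed left to right, as in the paper).\<close>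
definition negset :: "nat \<Rightarrow> (int \<Rightarrow> int) \<Rightarrow> int set" where
  "negset m f = {i \<in> {1..int m}. f i < 0}"

definition tcount :: "nat \<Rightarrow> (int \<Rightarrow> int) \<Rightarrow> nat" where
  "tcount m f = card (negset m f)"

definition sgn_char :: "nat \<Rightarrow> (int \<Rightarrow> int) \<Rightarrow> int" where
  "sgn_char m f = (-1) ^ tcount m f"

definition WD :: "nat \<Rightarrow> (int \<Rightarrow> int) set" where
  "WD m = {f \<in> WB m. sgn_char m f = 1}"

definition sp_subgroup :: "nat \<Rightarrow> (int \<Rightarrow> int) set \<Rightarrow> bool" where
  "sp_subgroup m H \<longleftrightarrow> H \<subseteq> WB m \<and> id \<in> H \<and>
     (\<forall>f\<in>H. \<forall>g\<in>H. f \<circ> g \<in> H) \<and> (\<forall>f\<in>H. inv f \<in> H)"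

text \<open>The lattice Z^{m+2} = (+)_{i=-1}^m Z l_i, as integer vectors supported on {-1..m}.\<close>
definition lattice :: "nat \<Rightarrow> (int \<Rightarrow> int) set" where
  "lattice m = {x. \<forall>j. j \<notin> {-1..int m} \<longrightarrow> x j = 0}"

definition lb :: "int \<Rightarrow> int \<Rightarrow> int" where
  "lb i = (\<lambda>j. if j = i then 1 else 0)"

definition phiB :: "nat \<Rightarrow> (int \<Rightarrow> int) \<Rightarrow> int \<Rightarrow> int \<Rightarrow> int" where
  "phiB m f i =
    (if i = 0 then lb 0
     else if i = -1 then
       (\<lambda>j. lb (-1) j + int (tcount m f div 2) * lb 0 j - (\<Sum>k\<in>negset m f. lb k j))
     else (let w = inv f i; u = \<bar>w\<bar> in
           if w > 0 then lb u else (\<lambda>j. lb 0 j - lb u j)))"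

definition Phi :: "nat \<Rightarrow> (int \<Rightarrow> int) \<Rightarrow> (int \<Rightarrow> int) \<Rightarrow> (int \<Rightarrow> int)" where
  "Phi m f x = (\<lambda>j. \<Sum>i\<in>{-1..int m}. x i * phiB m f i j)"

text \<open>H^1(H, Z^{m+2}) = 0: every crossed homomorphism is principal. The group law of
  the paper is g h = (first g, then h), i.e. the function h o g; Phi is a
  homomorphism for this law.\<close>
definition H1_vanishes :: "nat \<Rightarrow> (int \<Rightarrow> int) set \<Rightarrow> bool" where
  "H1_vanishes m H \<longleftrightarrow>
    (\<forall>c :: (int \<Rightarrow> int) \<Rightarrow> (int \<Rightarrow> int).
       (\<forall>g\<in>H. c g \<in> lattice m) \<and>
       (\<forall>g\<in>H. \<forall>h\<in>H. c (h \<circ> g) = (\<lambda>j. c g j + Phi m g (c h) j))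
       \<longrightarrow> (\<exists>a\<in>lattice m. \<forall>g\<in>H. c g = (\<lambda>j. Phi m g a j - a j)))"

definition cond_H1 :: "nat \<Rightarrow> (int \<Rightarrow> int) set \<Rightarrow> bool" where
  "cond_H1 m H \<longleftrightarrow> (\<forall>H'. sp_subgroup m H' \<and> H' \<subseteq> H \<longrightarrow> H1_vanishes m H')"

definition Kvec :: "nat \<Rightarrow> int \<Rightarrow> int" where
  "Kvec m = (\<lambda>j. -2 * (lb (-1) j + lb 0 j) + (\<Sum>i\<in>{1..int m}. lb i j))"

definition rel_minimal :: "nat \<Rightarrow> (int \<Rightarrow> int) set \<Rightarrow> bool" where
  "rel_minimal m H \<longleftrightarrow>
    {x \<in> lattice m. \<forall>g\<in>H. Phi m g x = x} =
    {(\<lambda>j. a * lb 0 j + b * Kvec m j) | a b :: int. True}"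

text \<open>Minimality (the combinatorial consequence stated in the paper): for each j,
  j+ and j- lie in one G-orbit.\<close>
definition minimal :: "nat \<Rightarrow> (int \<Rightarrow> int) set \<Rightarrow> bool" where
  "minimal m G \<longleftrightarrow> (\<forall>j\<in>{1..int m}. \<exists>g\<in>G. g j = - j)"

definition is_pr_orbit :: "nat \<Rightarrow> (int \<Rightarrow> int) set \<Rightarrow> int set \<Rightarrow> bool" where
  "is_pr_orbit n G Orb \<longleftrightarrow> Orb \<noteq> {} \<and> Orb \<subseteq> {1..int n} \<and>
     (\<forall>i\<in>Orb. {pr g i | g. g \<in> G} = Orb)"

text \<open>g_O: product of the signed permutation cycles of g whose underlying cycle
  lies in O = {1..n'}; sigma(g_O); and P_O(g).\<close>
definition gO :: "nat \<Rightarrow> (int \<Rightarrow> int) \<Rightarrow> int \<Rightarrow> int" where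
  "gO n' g = (\<lambda>x. if \<bar>x\<bar> \<in> {1..int n'} then g x else x)"

definition PO :: "nat \<Rightarrow> (int \<Rightarrow> int) \<Rightarrow> int \<Rightarrow> int" where
  "PO n' g = (if sgn_char n' (gO n' g) = -1
              then (\<lambda>x. if \<bar>x\<bar> = int n' + 1 then - x else gO n' g x)
              else gO n' g)"

end

(* Restricting g to the orbit O = {1..n'} and, when g_O is odd, composing with the sign change
   c_(n'+1) is a homomorphism P_O from G onto a subgroup of W(D_N). Both conditions become
   statements about flipped symbols, i.e. symbols j with s j = -j for some group element s.

   Relative minimality holds as soon as every symbol is flipped. For P_O(G) this follows from
   minimality of G, since P_O(g) flips n'+1 exactly when g changes an odd number of signs on O.

   For (H1) we show that for a subgroup H of W(D_m) the group H^1(H, Z^(m+2)) vanishes iff for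
   every H-stable set U of indices on which every element changes an even number of signs, the
   flipped symbols lie all inside U or all outside U. If both occur, "half the sign changes on U"
   is a cocycle which, by a parity argument at l_(-1), is not a coboundary. Conversely, for a
   cocycle c the values of c on orbit representatives give a vector 2a with Phi(h)(2a) - 2a = 2c(h);
   only the parity of a_(-1) is free, the symbols where a fails to be integral form such a set U,
   and separation lets one choose that parity so that a is integral.

   A subgroup of P_O(G) is the image of its preimage in G, and a stable even set for it lifts to
   one for the preimage, the symbol n'+1 being traded for the complement {n'+1..n} of the orbit. *)

theory Submission
  imports Defs
begin

section \<open>Signed permutations\<close>

lemma signed_perm_permutes: "signed_perm m f \<Longrightarrow> f permutes ({- int m..int m} - {0})"
  by (simp add: signed_perm_def)

lemma signed_perm_minus: "signed_perm m f \<Longrightarrow> f (- x) = - f x"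
  by (simp add: signed_perm_def)

lemma signed_perm_bij: "signed_perm m f \<Longrightarrow> bij f"
  using signed_perm_permutes permutes_bij by blast

lemma signed_perm_inv_apply: "signed_perm m f \<Longrightarrow> inv f (f x) = x"
  using signed_perm_bij bij_is_inj inv_f_f by metis

lemma signed_perm_apply_inv: "signed_perm m f \<Longrightarrow> f (inv f x) = x"
  using signed_perm_bij bij_is_surj surj_f_inv_f by metis

lemma signed_perm_comp_inv: "signed_perm m f \<Longrightarrow> f \<circ> inv f = id"
  using signed_perm_apply_inv by fastforce

lemma signed_perm_inv: "signed_perm m f \<Longrightarrow> signed_perm m (inv f)"
  unfolding signed_perm_def by (metis permutes_inv permutes_inv_eq)

lemma signed_perm_comp: "signed_perm m f \<Longrightarrow> signed_perm m g \<Longrightarrow> signed_perm m (f \<circ> g)"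
  unfolding signed_perm_def by (simp add: permutes_compose)

lemma signed_perm_mono: "signed_perm m f \<Longrightarrow> m \<le> m' \<Longrightarrow> signed_perm m' f"
  unfolding signed_perm_def by (auto intro: permutes_superset)

lemma signed_perm_abs_mem:
  assumes "signed_perm m f" and "i \<in> {1..int m}"
  shows "\<bar>f i\<bar> \<in> {1..int m}"
proof -
  have "f i \<in> {- int m..int m} - {0}"
    using assms permutes_in_image[OF signed_perm_permutes[OF assms(1)]] by auto
  then show ?thesis by auto
qed

lemma signed_perm_nonzero: "signed_perm m f \<Longrightarrow> i \<in> {1..int m} \<Longrightarrow> f i \<noteq> 0"
  using signed_perm_abs_mem by fastforce

lemma signed_perm_sgn_mult: "signed_perm m f \<Longrightarrow> s = 1 \<or> s = -1 \<Longrightarrow> f (s * x) = s * f x"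
  using signed_perm_minus[of m f x] by auto

lemma signed_perm_abs_abs: "signed_perm m f \<Longrightarrow> \<bar>f \<bar>x\<bar>\<bar> = \<bar>f x\<bar>"
  by (cases "x < 0") (auto simp: signed_perm_minus)

lemma signed_perm_inv_abs: "signed_perm m f \<Longrightarrow> inv f \<bar>f j\<bar> = (if f j < 0 then - j else j)"
  using signed_perm_inv_apply[of m f "- j"] signed_perm_inv_apply[of m f j]
  by (simp add: signed_perm_minus)

lemma finite_WB: "finite (WB m)"
proof -
  have "WB m \<subseteq> {p. p permutes ({- int m..int m} - {0})}"
    by (auto simp: WB_def signed_perm_permutes)
  then show ?thesis
    using finite_permutations[of "{- int m..int m} - {0}"] finite_subset by auto
qed

lemma WD_signed_perm: "f \<in> WD m \<Longrightarrow> signed_perm m f"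
  by (simp add: WD_def WB_def)

lemma WD_even: "f \<in> WD m \<Longrightarrow> even (tcount m f)"
  by (auto simp: WD_def sgn_char_def minus_one_power_iff split: if_splits)

lemma WD_iff: "f \<in> WD m \<longleftrightarrow> signed_perm m f \<and> even (tcount m f)"
  by (auto simp: WD_def WB_def sgn_char_def minus_one_power_iff)

lemma subgroup_signed_perm: "sp_subgroup m H \<Longrightarrow> h \<in> H \<Longrightarrow> signed_perm m h"
  by (auto simp: sp_subgroup_def WB_def)

lemma subgroup_id: "sp_subgroup m H \<Longrightarrow> id \<in> H"
  by (simp add: sp_subgroup_def)

lemma subgroup_comp: "sp_subgroup m H \<Longrightarrow> f \<in> H \<Longrightarrow> g \<in> H \<Longrightarrow> f \<circ> g \<in> H"
  by (simp add: sp_subgroup_def)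

lemma subgroup_inv: "sp_subgroup m H \<Longrightarrow> f \<in> H \<Longrightarrow> inv f \<in> H"
  by (simp add: sp_subgroup_def)

lemma subgroup_finite: "sp_subgroup m H \<Longrightarrow> finite H"
  using finite_WB finite_subset by (auto simp: sp_subgroup_def)

lemma additive_on_finite_group_vanishes:
  fixes \<phi> :: "('a \<Rightarrow> 'a) \<Rightarrow> int"
  assumes "finite K" and comp: "\<And>f g. f \<in> K \<Longrightarrow> g \<in> K \<Longrightarrow> f \<circ> g \<in> K"
    and inv: "\<And>f. f \<in> K \<Longrightarrow> inv f \<in> K" and bij: "\<And>f. f \<in> K \<Longrightarrow> bij f"
    and additive: "\<And>f g. f \<in> K \<Longrightarrow> g \<in> K \<Longrightarrow> \<phi> (f \<circ> g) = \<phi> g + \<phi> f"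
    and "h \<in> K"
  shows "\<phi> h = 0"
proof -
  have "bij_betw ((\<circ>) h) K K"
  proof (rule bij_betw_byWitness[where f' = "(\<circ>) (inv h)"])
    have "inv h \<circ> h = id" "h \<circ> inv h = id"
      using bij[OF \<open>h \<in> K\<close>] by (simp_all add: bij_is_inj bij_is_surj flip: surj_iff)
    then show "\<forall>g\<in>K. inv h \<circ> (h \<circ> g) = g" "\<forall>g\<in>K. h \<circ> (inv h \<circ> g) = g"
      by (simp_all add: o_assoc)
  qed (use comp inv \<open>h \<in> K\<close> in auto)
  then have "(\<Sum>g\<in>K. \<phi> (h \<circ> g)) = (\<Sum>g\<in>K. \<phi> g)"
    using sum.reindex_bij_betw by blast
  moreover have "(\<Sum>g\<in>K. \<phi> (h \<circ> g)) = (\<Sum>g\<in>K. \<phi> g) + int (card K) * \<phi> h"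
    using additive \<open>h \<in> K\<close> by (simp add: sum.distrib)
  moreover have "card K > 0"
    using \<open>finite K\<close> \<open>h \<in> K\<close> card_gt_0_iff by blast
  ultimately show ?thesis by simp
qed

lemma additive_on_subgroup_vanishes:
  fixes \<phi> :: "(int \<Rightarrow> int) \<Rightarrow> int"
  assumes H: "sp_subgroup m H"
    and "\<And>f g. f \<in> H \<Longrightarrow> g \<in> H \<Longrightarrow> \<phi> (f \<circ> g) = \<phi> g + \<phi> f" and "h \<in> H"
  shows "\<phi> h = 0"
  by (rule additive_on_finite_group_vanishes[where \<phi> = \<phi>, OF subgroup_finite[OF H]
        subgroup_comp[OF H] subgroup_inv[OF H] signed_perm_bij[OF subgroup_signed_perm[OF H]]
        assms(2,3)])

lemma additive_on_stabilizer_vanishes: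
  fixes \<phi> :: "(int \<Rightarrow> int) \<Rightarrow> int"
  assumes H: "sp_subgroup m H"
    and additive: "\<And>f g. f \<in> H \<Longrightarrow> g \<in> H \<Longrightarrow> f r = r \<Longrightarrow> g r = r \<Longrightarrow> \<phi> (f \<circ> g) = \<phi> g + \<phi> f"
    and "h \<in> H" and "h r = r"
  shows "\<phi> h = 0"
proof (rule additive_on_finite_group_vanishes[where K = "{f \<in> H. f r = r}" and \<phi> = \<phi>])
  show "finite {f \<in> H. f r = r}"
    using subgroup_finite[OF H] by simp
  show "inv f \<in> {f \<in> H. f r = r}" if "f \<in> {f \<in> H. f r = r}" for f
  proof -
    have "inv f (f r) = r"
      using that signed_perm_inv_apply[OF subgroup_signed_perm[OF H]] by blast
    then show ?thesis using that subgroup_inv[OF H] by auto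
  qed
  show "bij f" if "f \<in> {f \<in> H. f r = r}" for f
    using that signed_perm_bij[OF subgroup_signed_perm[OF H]] by blast
  show "f \<circ> g \<in> {f \<in> H. f r = r}" if "f \<in> {f \<in> H. f r = r}" "g \<in> {f \<in> H. f r = r}" for f g
    using that subgroup_comp[OF H] by auto
  show "\<phi> (f \<circ> g) = \<phi> g + \<phi> f" if "f \<in> {f \<in> H. f r = r}" "g \<in> {f \<in> H. f r = r}" for f g
    using that additive by blast
  show "h \<in> {f \<in> H. f r = r}"
    using assms by blast
qed

section \<open>Sign changes on sets stable under the underlying permutation\<close>

definition abs_stable :: "(int \<Rightarrow> int) \<Rightarrow> int set \<Rightarrow> bool" where
  "abs_stable f U \<longleftrightarrow> (\<forall>j\<in>U. \<bar>f j\<bar> \<in> U)"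

definition neg_count :: "int set \<Rightarrow> (int \<Rightarrow> int) \<Rightarrow> int" where
  "neg_count U f = (\<Sum>j\<in>U. if f j < 0 then 1 else 0)"

lemma abs_stable_full: "signed_perm m f \<Longrightarrow> abs_stable f {1..int m}"
  unfolding abs_stable_def using signed_perm_abs_mem by blast

lemma bij_betw_abs:
  assumes f: "signed_perm m f" and U: "U \<subseteq> {1..int m}" and "abs_stable f U"
  shows "bij_betw (\<lambda>j. \<bar>f j\<bar>) U U"
proof -
  have "inj_on (\<lambda>j. \<bar>f j\<bar>) U"
  proof (rule inj_onI)
    fix x y assume "x \<in> U" "y \<in> U" "\<bar>f x\<bar> = \<bar>f y\<bar>"
    then have "f x = f y \<or> f x = f (- y)"
      using signed_perm_minus[OF f, of y] by auto
    then have "x = y \<or> x = - y"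
      using signed_perm_inv_apply[OF f] by metis
    moreover have "x \<ge> 1" "y \<ge> 1"
      using \<open>x \<in> U\<close> \<open>y \<in> U\<close> U by auto
    ultimately show "x = y" by auto
  qed
  moreover have "(\<lambda>j. \<bar>f j\<bar>) ` U \<subseteq> U"
    using \<open>abs_stable f U\<close> by (auto simp: abs_stable_def)
  moreover have "finite U"
    using U finite_subset by blast
  ultimately show ?thesis
    by (simp add: bij_betw_def card_image card_subset_eq)
qed

lemma sum_reindex_abs:
  assumes "signed_perm m f" and "U \<subseteq> {1..int m}" and "abs_stable f U"
  shows "(\<Sum>i\<in>U. F i) = (\<Sum>j\<in>U. F \<bar>f j\<bar>)"
  using sum.reindex_bij_betw[OF bij_betw_abs[OF assms], of F] by simp

lemma abs_stable_inv:
  assumes f: "signed_perm m f" and U: "U \<subseteq> {1..int m}" and "abs_stable f U"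
  shows "abs_stable (inv f) U"
  unfolding abs_stable_def
proof
  fix i assume "i \<in> U"
  then obtain j where "j \<in> U" "i = \<bar>f j\<bar>"
    using bij_betw_imp_surj_on[OF bij_betw_abs[OF assms]] by blast
  moreover have "j \<ge> 1"
    using \<open>j \<in> U\<close> U by auto
  ultimately show "\<bar>inv f i\<bar> \<in> U"
    using signed_perm_inv_abs[OF f, of j] by auto
qed

lemma abs_stable_iff:
  assumes f: "signed_perm m f" and "U \<subseteq> {1..int m}" and "abs_stable f U"
    and j: "j \<in> {1..int m}"
  shows "\<bar>f j\<bar> \<in> U \<longleftrightarrow> j \<in> U"
proof
  assume "\<bar>f j\<bar> \<in> U"
  then have "\<bar>inv f \<bar>f j\<bar>\<bar> \<in> U"
    using abs_stable_inv[OF assms(1-3)] by (auto simp: abs_stable_def)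
  then show "j \<in> U"
    using signed_perm_inv_abs[OF f, of j] j by (simp split: if_splits)
qed (use \<open>abs_stable f U\<close> in \<open>auto simp: abs_stable_def\<close>)

lemma tcount_eq_neg_count: "int (tcount m f) = neg_count {1..int m} f"
  unfolding tcount_def negset_def neg_count_def
  by (simp add: sum.inter_filter[symmetric])

lemma neg_count_union:
  "finite A \<Longrightarrow> finite B \<Longrightarrow> A \<inter> B = {} \<Longrightarrow> neg_count (A \<union> B) f = neg_count A f + neg_count B f"
  unfolding neg_count_def by (rule sum.union_disjoint)

lemma neg_count_inv:
  assumes g: "signed_perm m g" and "U \<subseteq> {1..int m}" and "abs_stable g U"
  shows "neg_count U (inv g) = neg_count U g"
proof -
  have "neg_count U (inv g) = (\<Sum>j\<in>U. if inv g \<bar>g j\<bar> < 0 then 1 else 0)"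
    unfolding neg_count_def by (rule sum_reindex_abs[OF assms])
  also have "\<dots> = neg_count U g"
    unfolding neg_count_def using signed_perm_inv_abs[OF g] assms(2)
    by (intro sum.cong) auto
  finally show ?thesis .
qed

lemma neg_count_comp:
  assumes g: "signed_perm m g" and h: "signed_perm m h"
    and U: "U \<subseteq> {1..int m}" and "abs_stable g U"
  shows "neg_count U (h \<circ> g) =
    neg_count U h + neg_count U g - 2 * (\<Sum>i\<in>U. if inv g i < 0 \<and> h i < 0 then 1 else 0)"
proof -
  \<comment> \<open>(h \<circ> g) j < 0 iff exactly one of g j and h \<bar>g j\<bar> is negative\<close>
  define F where "F i = (if (if inv g i < 0 then - h i else h i) < 0 then 1 else (0::int))" for i
  have "neg_count U (h \<circ> g) = (\<Sum>j\<in>U. F \<bar>g j\<bar>)"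
    unfolding neg_count_def F_def
    using U signed_perm_inv_abs[OF g] signed_perm_minus[OF h]
    by (intro sum.cong) (auto simp: abs_if)
  also have "\<dots> = (\<Sum>i\<in>U. F i)"
    by (rule sum_reindex_abs[OF assms(1,3,4), symmetric])
  also have "\<dots> = (\<Sum>i\<in>U. (if h i < 0 then 1 else 0) + (if inv g i < 0 then 1 else 0)
                       - 2 * (if inv g i < 0 \<and> h i < 0 then 1 else 0))"
    unfolding F_def using U signed_perm_nonzero[OF h] by (intro sum.cong) auto
  also have "\<dots> = neg_count U h + neg_count U (inv g)
                  - 2 * (\<Sum>i\<in>U. if inv g i < 0 \<and> h i < 0 then 1 else 0)"
    by (simp add: neg_count_def sum.distrib sum_subtractf sum_distrib_left)
  finally show ?thesis
    using neg_count_inv[OF assms(1,3,4)] by simp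
qed

section \<open>The action \<Phi> in coordinates\<close>

lemma sum_phiB_pos:
  assumes g: "signed_perm m g"
  shows "(\<Sum>i\<in>{1..int m}. x i * phiB m g i j)
    = (\<Sum>i\<in>{1..int m}. if inv g i < 0 then x i else 0) * lb 0 j
      + (if j \<in> {1..int m} then (if g j < 0 then - x (- g j) else x (g j)) else 0)"
proof -
  have "(\<Sum>i\<in>{1..int m}. (if inv g i < 0 then - x i else x i) * lb \<bar>inv g i\<bar> j)
      = (\<Sum>k\<in>{1..int m}. (if g k < 0 then - x (- g k) else x (g k)) * lb k j)"
    by (subst sum_reindex_abs[OF g order_refl abs_stable_full[OF g]])
      (use signed_perm_inv_abs[OF g] in \<open>auto intro: sum.cong\<close>)
  also have "\<dots> = (\<Sum>k\<in>{1..int m}. if j = k then (if g k < 0 then - x (- g k) else x (g k)) else 0)"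
    by (intro sum.cong) (auto simp: lb_def)
  also have "\<dots> = (if j \<in> {1..int m} then (if g j < 0 then - x (- g j) else x (g j)) else 0)"
    by (rule sum.delta') simp
  finally have reindexed: "(\<Sum>i\<in>{1..int m}. (if inv g i < 0 then - x i else x i) * lb \<bar>inv g i\<bar> j)
      = (if j \<in> {1..int m} then (if g j < 0 then - x (- g j) else x (g j)) else 0)" .
  have "(\<Sum>i\<in>{1..int m}. x i * phiB m g i j)
      = (\<Sum>i\<in>{1..int m}. (if inv g i < 0 then x i else 0) * lb 0 j
          + (if inv g i < 0 then - x i else x i) * lb \<bar>inv g i\<bar> j)"
    using signed_perm_nonzero[OF signed_perm_inv[OF g]]
    by (intro sum.cong) (auto simp: phiB_def Let_def right_diff_distrib)
  also have "\<dots> = (\<Sum>i\<in>{1..int m}. if inv g i < 0 then x i else 0) * lb 0 j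
      + (if j \<in> {1..int m} then (if g j < 0 then - x (- g j) else x (g j)) else 0)"
    by (simp only: sum.distrib sum_distrib_right reindexed)
  finally show ?thesis .
qed

lemma Phi_apply:
  assumes g: "signed_perm m g"
  shows "Phi m g x j =
    (if j = -1 then x (-1)
     else if j = 0
       then x 0 + x (-1) * int (tcount m g div 2) + (\<Sum>i\<in>{1..int m}. if inv g i < 0 then x i else 0)
     else if j \<in> {1..int m} then (if g j < 0 then - x (-1) - x (- g j) else x (g j))
     else 0)"
proof -
  have "{-1..int m} = insert (-1) (insert 0 {1..int m})"
    by auto
  moreover have "finite (negset m g)"
    by (rule finite_subset[of _ "{1..int m}"]) (auto simp: negset_def)
  then have "phiB m g (-1) j = lb (-1) j + int (tcount m g div 2) * lb 0 j
      - (if j \<in> {1..int m} \<and> g j < 0 then 1 else 0)"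
    by (simp add: phiB_def lb_def sum.delta') (auto simp: negset_def)
  ultimately show ?thesis
    unfolding Phi_def using sum_phiB_pos[OF g] by (simp add: phiB_def lb_def)
qed

lemma Phi_minus_one: "signed_perm m g \<Longrightarrow> Phi m g x (-1) = x (-1)"
  by (simp add: Phi_apply)

lemma Phi_zero: "signed_perm m g \<Longrightarrow> Phi m g x 0 =
    x 0 + x (-1) * int (tcount m g div 2) + (\<Sum>i\<in>{1..int m}. if inv g i < 0 then x i else 0)"
  by (simp add: Phi_apply)

lemma Phi_pos: "signed_perm m g \<Longrightarrow> j \<in> {1..int m} \<Longrightarrow>
  Phi m g x j = (if g j < 0 then - x (-1) - x (- g j) else x (g j))"
  by (simp add: Phi_apply)

lemma Phi_outside: "signed_perm m g \<Longrightarrow> j \<notin> {-1..int m} \<Longrightarrow> Phi m g x j = 0"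
  by (subst Phi_apply) auto

lemma Phi_linear: "Phi m g (\<lambda>j. a * x j + b * y j) j = a * Phi m g x j + b * Phi m g y j"
  by (simp add: Phi_def algebra_simps sum.distrib sum_distrib_left)

lemma Phi_scale: "Phi m g (\<lambda>j. k * x j) j = k * Phi m g x j"
  by (simp add: Phi_def sum_distrib_left mult.assoc)

lemma sum_neg_inv_comp:
  fixes x :: "int \<Rightarrow> int"
  assumes g: "signed_perm m g" and h: "signed_perm m h"
  shows "(\<Sum>k\<in>{1..int m}. if inv (h \<circ> g) k < 0 then x k else 0) =
    (\<Sum>k\<in>{1..int m}. if inv h k < 0 then x k else 0) +
    (\<Sum>i\<in>{1..int m}. if inv g i < 0 then (if h i < 0 then - x (- h i) else x (h i)) else 0)"
proof -
  have inv_comp: "inv (h \<circ> g) = inv g \<circ> inv h"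
    using o_inv_distrib[OF signed_perm_bij[OF h] signed_perm_bij[OF g]] .
  have reindex: "(\<Sum>k\<in>{1..int m}. F k) = (\<Sum>i\<in>{1..int m}. F \<bar>h i\<bar>)" for F :: "int \<Rightarrow> int"
    by (rule sum_reindex_abs[OF h order_refl abs_stable_full[OF h]])
  have "(\<Sum>k\<in>{1..int m}. if inv (h \<circ> g) k < 0 then x k else 0)
      = (\<Sum>i\<in>{1..int m}. (if inv h \<bar>h i\<bar> < 0 then x \<bar>h i\<bar> else 0) +
           (if inv g i < 0 then (if h i < 0 then - x (- h i) else x (h i)) else 0))"
    unfolding reindex[of "\<lambda>k. if inv (h \<circ> g) k < 0 then x k else 0"]
  proof (intro sum.cong refl)
    fix i assume i: "i \<in> {1..int m}"
    have "inv g i \<noteq> 0" "h i \<noteq> 0"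
      using signed_perm_nonzero[OF signed_perm_inv[OF g] i] signed_perm_nonzero[OF h i] .
    then show "(if inv (h \<circ> g) \<bar>h i\<bar> < 0 then x \<bar>h i\<bar> else 0)
        = (if inv h \<bar>h i\<bar> < 0 then x \<bar>h i\<bar> else 0) +
          (if inv g i < 0 then (if h i < 0 then - x (- h i) else x (h i)) else 0)"
      using i signed_perm_inv_abs[OF h, of i] signed_perm_minus[OF signed_perm_inv[OF g], of i]
      by (auto simp: inv_comp)
  qed
  also have "\<dots> = (\<Sum>k\<in>{1..int m}. if inv h k < 0 then x k else 0) +
      (\<Sum>i\<in>{1..int m}. if inv g i < 0 then (if h i < 0 then - x (- h i) else x (h i)) else 0)"
    using reindex[of "\<lambda>k. if inv h k < 0 then x k else 0"] by (simp add: sum.distrib)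
  finally show ?thesis .
qed

lemma half_tcount_comp:
  assumes g: "g \<in> WD m" and h: "h \<in> WD m"
  shows "int (tcount m (h \<circ> g) div 2) = int (tcount m h div 2) + int (tcount m g div 2) -
     (\<Sum>i\<in>{1..int m}. if inv g i < 0 \<and> h i < 0 then 1 else 0)"
proof -
  have g': "signed_perm m g" and h': "signed_perm m h"
    using g h WD_signed_perm by auto
  have half: "int (tcount m f div 2) = neg_count {1..int m} f div 2" for f
    by (simp flip: tcount_eq_neg_count)
  have "even (neg_count {1..int m} g)" "even (neg_count {1..int m} h)"
    using WD_even[OF g] WD_even[OF h] by (simp_all flip: tcount_eq_neg_count)
  then show ?thesis
    unfolding half neg_count_comp[OF g' h' order_refl abs_stable_full[OF g']]
    by (auto elim!: evenE)
qed

lemma Phi_comp: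
  assumes g: "g \<in> WD m" and h: "h \<in> WD m"
  shows "Phi m (h \<circ> g) x = Phi m g (Phi m h x)"
proof
  fix j
  have g': "signed_perm m g" and h': "signed_perm m h"
    using g h WD_signed_perm by auto
  have hg: "signed_perm m (h \<circ> g)"
    by (rule signed_perm_comp[OF h' g'])
  consider "j = -1" | "j = 0" | "j \<in> {1..int m}" | "j \<notin> {-1..int m}" by fastforce
  then show "Phi m (h \<circ> g) x j = Phi m g (Phi m h x) j"
  proof cases
    case 1
    then show ?thesis
      by (simp add: Phi_minus_one[OF g'] Phi_minus_one[OF h'] Phi_minus_one[OF hg])
  next
    case 2
    have "(\<Sum>i\<in>{1..int m}. if inv g i < 0 then Phi m h x i else 0) =
       (\<Sum>i\<in>{1..int m}. (if inv g i < 0 then (if h i < 0 then - x (- h i) else x (h i)) else 0)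
          - x (-1) * (if inv g i < 0 \<and> h i < 0 then 1 else 0))"
      by (intro sum.cong) (auto simp: Phi_pos[OF h'])
    then have "(\<Sum>i\<in>{1..int m}. if inv g i < 0 then Phi m h x i else 0) =
       (\<Sum>i\<in>{1..int m}. if inv g i < 0 then (if h i < 0 then - x (- h i) else x (h i)) else 0)
       - x (-1) * (\<Sum>i\<in>{1..int m}. if inv g i < 0 \<and> h i < 0 then 1 else 0)"
      by (simp add: sum_subtractf sum_distrib_left)
    then show ?thesis
      using 2 by (simp add: Phi_zero[OF hg] Phi_zero[OF g'] Phi_zero[OF h'] Phi_minus_one[OF h']
          sum_neg_inv_comp[OF g' h'] half_tcount_comp[OF g h] algebra_simps)
  next
    case 3
    then have "\<bar>g j\<bar> \<in> {1..int m}" "h (- g j) = - h (g j)"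
      using signed_perm_abs_mem[OF g'] signed_perm_minus[OF h'] by auto
    then show ?thesis
      using 3 signed_perm_nonzero[OF h', of "- g j"] signed_perm_nonzero[OF h', of "g j"]
      by (auto simp: Phi_pos[OF g'] Phi_pos[OF h'] Phi_pos[OF hg] Phi_minus_one[OF h'] abs_if
          split: if_splits)
  next
    case 4
    then show ?thesis
      by (simp add: Phi_outside[OF g'] Phi_outside[OF hg])
  qed
qed

section \<open>Flipped symbols and orbit representatives\<close>

definition flipped :: "(int \<Rightarrow> int) set \<Rightarrow> int \<Rightarrow> bool" where
  "flipped H j \<longleftrightarrow> (\<exists>s\<in>H. s j = - j)"

definition abs_orbit :: "(int \<Rightarrow> int) set \<Rightarrow> int \<Rightarrow> int set" where
  "abs_orbit H i = {\<bar>h i\<bar> | h. h \<in> H}"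

definition orbit_rep :: "(int \<Rightarrow> int) set \<Rightarrow> int \<Rightarrow> int" where
  "orbit_rep H i = (SOME r. r \<in> abs_orbit H i)"

definition transporter :: "(int \<Rightarrow> int) set \<Rightarrow> int \<Rightarrow> int \<Rightarrow> int" where
  "transporter H i = (SOME g. g \<in> H \<and> \<bar>g (orbit_rep H i)\<bar> = i)"

definition orbit_sign :: "(int \<Rightarrow> int) set \<Rightarrow> int \<Rightarrow> int" where
  "orbit_sign H i = sgn (transporter H i (orbit_rep H i))"

context
  fixes m :: nat and H :: "(int \<Rightarrow> int) set"
  assumes H: "sp_subgroup m H"
begin

private lemma member_signed_perm: "h \<in> H \<Longrightarrow> signed_perm m h"
  by (rule subgroup_signed_perm[OF H])

lemma abs_orbit_move:
  assumes h: "h \<in> H"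
  shows "abs_orbit H \<bar>h i\<bar> = abs_orbit H i"
proof (intro equalityI subsetI)
  fix y assume "y \<in> abs_orbit H \<bar>h i\<bar>"
  then obtain k where "k \<in> H" "y = \<bar>k \<bar>h i\<bar>\<bar>"
    by (auto simp: abs_orbit_def)
  then have "k \<circ> h \<in> H" "y = \<bar>(k \<circ> h) i\<bar>"
    using subgroup_comp[OF H _ h] signed_perm_abs_abs[OF member_signed_perm] by auto
  then show "y \<in> abs_orbit H i"
    unfolding abs_orbit_def by blast
next
  fix y assume "y \<in> abs_orbit H i"
  then obtain k where k: "k \<in> H" "y = \<bar>k i\<bar>"
    by (auto simp: abs_orbit_def)
  have "k \<circ> inv h \<in> H"
    using subgroup_comp[OF H k(1) subgroup_inv[OF H h]] .
  moreover have "y = \<bar>(k \<circ> inv h) \<bar>h i\<bar>\<bar>"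
    using k signed_perm_abs_abs[OF member_signed_perm[OF \<open>k \<circ> inv h \<in> H\<close>]]
      signed_perm_inv_apply[OF member_signed_perm[OF h]]
    by simp
  ultimately show "y \<in> abs_orbit H \<bar>h i\<bar>"
    unfolding abs_orbit_def by blast
qed

lemma orbit_rep_move: "h \<in> H \<Longrightarrow> orbit_rep H \<bar>h i\<bar> = orbit_rep H i"
  unfolding orbit_rep_def by (simp add: abs_orbit_move)

lemma orbit_rep_in_abs_orbit: "orbit_rep H i \<in> abs_orbit H i"
proof -
  have "\<bar>id i\<bar> \<in> abs_orbit H i"
    unfolding abs_orbit_def using subgroup_id[OF H] by blast
  then show ?thesis
    unfolding orbit_rep_def by (rule someI)
qed

lemma transporter:
  assumes i: "i \<in> {1..int m}"
  shows "transporter H i \<in> H" and "\<bar>transporter H i (orbit_rep H i)\<bar> = i"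
proof -
  obtain h where h: "h \<in> H" "orbit_rep H i = \<bar>h i\<bar>"
    using orbit_rep_in_abs_orbit by (auto simp: abs_orbit_def)
  then have "inv h \<in> H \<and> \<bar>inv h (orbit_rep H i)\<bar> = i"
    using subgroup_inv[OF H h(1)] signed_perm_inv_abs[OF member_signed_perm[OF h(1)], of i] i
    by auto
  then have "transporter H i \<in> H \<and> \<bar>transporter H i (orbit_rep H i)\<bar> = i"
    unfolding transporter_def by (rule someI[where P = "\<lambda>g. g \<in> H \<and> \<bar>g (orbit_rep H i)\<bar> = i"])
  then show "transporter H i \<in> H" and "\<bar>transporter H i (orbit_rep H i)\<bar> = i"
    by auto
qed

lemma orbit_rep_mem:
  assumes "i \<in> {1..int m}"
  shows "orbit_rep H i \<in> {1..int m}"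
proof -
  obtain h where "h \<in> H" "orbit_rep H i = \<bar>h i\<bar>"
    using orbit_rep_in_abs_orbit by (auto simp: abs_orbit_def)
  then show ?thesis
    using signed_perm_abs_mem[OF member_signed_perm assms] by simp
qed

lemma orbit_sign_cases: "i \<in> {1..int m} \<Longrightarrow> orbit_sign H i = 1 \<or> orbit_sign H i = -1"
  using transporter(2)[of i] by (auto simp: orbit_sign_def sgn_if)

lemma flipped_move_aux:
  assumes h: "h \<in> H" and "flipped H i"
  shows "flipped H \<bar>h i\<bar>"
proof -
  obtain s where s: "s \<in> H" "s i = - i"
    using \<open>flipped H i\<close> by (auto simp: flipped_def)
  define w where "w = h \<circ> s \<circ> inv h"
  have w: "w \<in> H"
    unfolding w_def using subgroup_comp[OF H subgroup_comp[OF H h s(1)] subgroup_inv[OF H h]] .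
  have "w (h i) = - h i"
    unfolding w_def using s(2) signed_perm_inv_apply[OF member_signed_perm[OF h]]
      signed_perm_minus[OF member_signed_perm[OF h]]
    by simp
  then have "w \<bar>h i\<bar> = - \<bar>h i\<bar>"
    by (cases "h i < 0") (auto simp: signed_perm_minus[OF member_signed_perm[OF w]])
  then show ?thesis
    using w by (auto simp: flipped_def)
qed

lemma flipped_move: "h \<in> H \<Longrightarrow> i \<ge> 0 \<Longrightarrow> flipped H \<bar>h i\<bar> = flipped H i"
  using flipped_move_aux[of "inv h" "\<bar>h i\<bar>"] flipped_move_aux[of h i]
    subgroup_inv[OF H] signed_perm_inv_abs[OF member_signed_perm, of h i]
  by (auto split: if_splits)

lemma flipped_orbit_rep: "i \<in> {1..int m} \<Longrightarrow> flipped H (orbit_rep H i) = flipped H i"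
  using orbit_rep_in_abs_orbit[of i] flipped_move by (auto simp: abs_orbit_def)

lemma transporter_apply:
  "i \<in> {1..int m} \<Longrightarrow> transporter H i (orbit_rep H i) = orbit_sign H i * i"
  using transporter(2) mult_sgn_abs[of "transporter H i (orbit_rep H i)"]
  by (simp add: orbit_sign_def)

lemma inv_transporter_apply:
  assumes i: "i \<in> {1..int m}"
  shows "inv (transporter H i) i = orbit_sign H i * orbit_rep H i"
proof -
  have "transporter H i (orbit_sign H i * orbit_rep H i) = i"
    using transporter_apply[OF i] orbit_sign_cases[OF i]
      signed_perm_sgn_mult[OF member_signed_perm[OF transporter(1)[OF i]], of "orbit_sign H i"]
    by auto
  then show ?thesis
    using signed_perm_inv_apply[OF member_signed_perm[OF transporter(1)[OF i]]] by metis
qed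

lemma unflipped_transport:
  assumes i: "i \<in> {1..int m}" and "\<not> flipped H i" and h: "h \<in> H"
  defines "w \<equiv> inv (transporter H \<bar>h i\<bar>) \<circ> (h \<circ> transporter H i)"
  shows "w (orbit_rep H i) = orbit_rep H i"
    and "orbit_sign H \<bar>h i\<bar> = orbit_sign H i * sgn (h i)"
proof -
  define k where "k = \<bar>h i\<bar>"
  have k: "k \<in> {1..int m}"
    unfolding k_def using signed_perm_abs_mem[OF member_signed_perm[OF h] i] .
  have hi: "h i = sgn (h i) * k" and sh: "sgn (h i) = 1 \<or> sgn (h i) = -1"
    unfolding k_def using signed_perm_nonzero[OF member_signed_perm[OF h] i]
    by (auto simp: mult_sgn_abs sgn_if)
  have si: "orbit_sign H i = 1 \<or> orbit_sign H i = -1"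
    and sk: "orbit_sign H k = 1 \<or> orbit_sign H k = -1"
    using orbit_sign_cases[OF i] orbit_sign_cases[OF k] .
  define e where "e = orbit_sign H i * sgn (h i) * orbit_sign H k"
  have "w (orbit_rep H i) = inv (transporter H k) (h (orbit_sign H i * i))"
    by (simp add: w_def k_def transporter_apply[OF i])
  also have "\<dots> = inv (transporter H k) ((orbit_sign H i * sgn (h i)) * k)"
    using signed_perm_sgn_mult[OF member_signed_perm[OF h] si, of i] hi by (simp add: mult.assoc)
  also have "\<dots> = (orbit_sign H i * sgn (h i)) * inv (transporter H k) k"
    by (rule signed_perm_sgn_mult[OF signed_perm_inv[OF member_signed_perm[OF transporter(1)[OF k]]]])
      (use si sh in auto)
  also have "\<dots> = e * orbit_rep H i"
    using inv_transporter_apply[OF k] orbit_rep_move[OF h, of i] unfolding e_def k_def by simp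
  finally have wr: "w (orbit_rep H i) = e * orbit_rep H i" .
  have "w \<in> H"
    unfolding w_def using transporter(1)[OF i] transporter(1)[OF k] h subgroup_inv[OF H]
      subgroup_comp[OF H]
    unfolding k_def by metis
  moreover have "\<not> flipped H (orbit_rep H i)"
    using flipped_orbit_rep[OF i] \<open>\<not> flipped H i\<close> by simp
  ultimately have "e = 1"
    using wr si sh sk unfolding e_def flipped_def by auto
  then show "w (orbit_rep H i) = orbit_rep H i"
    using wr by simp
  show "orbit_sign H \<bar>h i\<bar> = orbit_sign H i * sgn (h i)"
    using \<open>e = 1\<close> si sh sk unfolding e_def k_def by auto
qed

lemma even_neg_count_if_unflipped:
  assumes W: "W \<subseteq> {1..int m}" and stable: "\<forall>h\<in>H. abs_stable h W"
    and unflipped: "\<forall>j\<in>W. \<not> flipped H j" and h: "h \<in> H"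
  shows "even (neg_count W h)"
proof -
  define e where "e x = (if orbit_sign H x < 0 then 1 else (0::int))" for x
  have "(if h i < 0 then 1 else 0) = e i + e \<bar>h i\<bar> - 2 * (e i * e \<bar>h i\<bar>)" if "i \<in> W" for i
  proof -
    have i: "i \<in> {1..int m}"
      using that W by auto
    have "orbit_sign H \<bar>h i\<bar> = orbit_sign H i * sgn (h i)"
      using unflipped_transport(2)[OF i _ h] unflipped that by blast
    then show ?thesis
      unfolding e_def using orbit_sign_cases[OF i]
        signed_perm_nonzero[OF member_signed_perm[OF h] i]
      by (auto simp: sgn_if)
  qed
  then have "neg_count W h = (\<Sum>i\<in>W. e i) + (\<Sum>i\<in>W. e \<bar>h i\<bar>) - 2 * (\<Sum>i\<in>W. e i * e \<bar>h i\<bar>)"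
    unfolding neg_count_def by (simp add: sum.distrib sum_subtractf sum_distrib_left cong: sum.cong)
  also have "(\<Sum>i\<in>W. e \<bar>h i\<bar>) = (\<Sum>i\<in>W. e i)"
    using sum_reindex_abs[OF member_signed_perm[OF h] W, of e] stable h by simp
  finally show ?thesis by simp
qed

end

section \<open>A combinatorial form of condition (H1)\<close>

definition even_block :: "nat \<Rightarrow> (int \<Rightarrow> int) set \<Rightarrow> int set \<Rightarrow> bool" where
  "even_block m H U \<longleftrightarrow>
     U \<subseteq> {1..int m} \<and> (\<forall>h\<in>H. abs_stable h U) \<and> (\<forall>h\<in>H. even (neg_count U h))"

definition flip_separated :: "nat \<Rightarrow> (int \<Rightarrow> int) set \<Rightarrow> bool" where
  "flip_separated m H \<longleftrightarrow> (\<forall>U. even_block m H U \<longrightarrow>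
     (\<forall>j\<in>U. \<not> flipped H j) \<or> (\<forall>j\<in>{1..int m} - U. \<not> flipped H j))"

definition block_cocycle :: "int set \<Rightarrow> (int \<Rightarrow> int) \<Rightarrow> int \<Rightarrow> int" where
  "block_cocycle U h =
     (\<lambda>j. if j = 0 then neg_count U h div 2 else if j \<in> U \<and> h j < 0 then -1 else 0)"

lemma block_cocycle_comp:
  assumes g: "signed_perm m g" and h: "signed_perm m h"
    and U: "U \<subseteq> {1..int m}" and stable: "abs_stable g U"
    and "even (neg_count U g)" and "even (neg_count U h)"
  shows "block_cocycle U (h \<circ> g) = (\<lambda>j. block_cocycle U g j + Phi m g (block_cocycle U h) j)"
proof
  fix j
  have minus_one: "block_cocycle U f (-1) = 0" for f
    using U by (auto simp: block_cocycle_def)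
  consider "j = -1" | "j = 0" | "j \<in> {1..int m}" | "j \<notin> {-1..int m}" by fastforce
  then show "block_cocycle U (h \<circ> g) j = block_cocycle U g j + Phi m g (block_cocycle U h) j"
  proof cases
    case 1
    then show ?thesis by (simp add: Phi_minus_one[OF g] minus_one)
  next
    case 2
    have "(\<Sum>i\<in>{1..int m}. if inv g i < 0 then block_cocycle U h i else 0)
        = (\<Sum>i\<in>{1..int m}. if i \<in> U then - (if inv g i < 0 \<and> h i < 0 then 1 else 0) else 0)"
      by (intro sum.cong) (auto simp: block_cocycle_def)
    also have "\<dots> = (\<Sum>i\<in>{i \<in> {1..int m}. i \<in> U}. - (if inv g i < 0 \<and> h i < 0 then 1 else 0))"
      by (rule sum.inter_filter[symmetric]) simp
    also have "{i \<in> {1..int m}. i \<in> U} = U"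
      using U by auto
    finally have "(\<Sum>i\<in>{1..int m}. if inv g i < 0 then block_cocycle U h i else 0)
        = - (\<Sum>i\<in>U. if inv g i < 0 \<and> h i < 0 then 1 else 0)"
      by (simp add: sum_negf)
    moreover have "block_cocycle U f 0 = neg_count U f div 2" for f
      by (simp add: block_cocycle_def)
    ultimately show ?thesis
      using 2 \<open>even (neg_count U g)\<close> \<open>even (neg_count U h)\<close>
      by (auto simp: Phi_zero[OF g] neg_count_comp[OF g h U stable] minus_one elim!: evenE)
  next
    case 3
    have "\<bar>g j\<bar> \<in> U \<longleftrightarrow> j \<in> U"
      by (rule abs_stable_iff[OF g U stable 3])
    moreover have "h (- g j) = - h (g j)" "h (g j) \<noteq> 0"
      using signed_perm_minus[OF h] signed_perm_nonzero[OF h signed_perm_abs_mem[OF g 3]]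
        signed_perm_abs_abs[OF h, of "g j"] by auto
    ultimately show ?thesis
      using 3 U by (auto simp: block_cocycle_def Phi_pos[OF g] minus_one abs_if split: if_splits)
  next
    case 4
    then show ?thesis
      using U by (auto simp: block_cocycle_def Phi_outside[OF g])
  qed
qed

lemma coboundary_at_flip:
  "signed_perm m s \<Longrightarrow> j \<in> {1..int m} \<Longrightarrow> s j = - j \<Longrightarrow> Phi m s a j - a j = - a (-1) - 2 * a j"
  by (simp add: Phi_pos)

text \<open>A symbol flipped inside U and one flipped outside U force
  a coboundary to take values of different parity at -1.\<close>

lemma H1_vanishes_imp_flip_separated:
  assumes H: "sp_subgroup m H" and "H1_vanishes m H"
  shows "flip_separated m H"
  unfolding flip_separated_def
proof (intro allI impI)
  fix U assume "even_block m H U"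
  then have U: "U \<subseteq> {1..int m}" and stable: "\<forall>h\<in>H. abs_stable h U"
    and even: "\<forall>h\<in>H. even (neg_count U h)"
    by (auto simp: even_block_def)
  show "(\<forall>j\<in>U. \<not> flipped H j) \<or> (\<forall>j\<in>{1..int m} - U. \<not> flipped H j)"
  proof (rule ccontr)
    assume "\<not> ?thesis"
    then obtain j1 j2 s1 s2 where j1: "j1 \<in> U" "s1 \<in> H" "s1 j1 = - j1"
      and j2: "j2 \<in> {1..int m} - U" "s2 \<in> H" "s2 j2 = - j2"
      by (auto simp: flipped_def)
    have "\<forall>g\<in>H. block_cocycle U g \<in> lattice m"
      using U by (auto simp: lattice_def block_cocycle_def)
    moreover have
      "\<forall>g\<in>H. \<forall>h\<in>H. block_cocycle U (h \<circ> g) =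
        (\<lambda>j. block_cocycle U g j + Phi m g (block_cocycle U h) j)"
      using block_cocycle_comp[OF subgroup_signed_perm[OF H] subgroup_signed_perm[OF H] U] stable
        even
      by blast
    ultimately obtain a where a: "\<forall>g\<in>H. block_cocycle U g = (\<lambda>j. Phi m g a j - a j)"
      using \<open>H1_vanishes m H\<close> unfolding H1_vanishes_def by blast
    have "j1 \<in> {1..int m}"
      using j1(1) U by auto
    have "block_cocycle U s1 j1 = Phi m s1 a j1 - a j1"
      "block_cocycle U s2 j2 = Phi m s2 a j2 - a j2"
      using a j1(2) j2(2) by auto
    then have "-1 = - a (-1) - 2 * a j1" "0 = - a (-1) - 2 * a j2"
      using j1 j2 \<open>j1 \<in> {1..int m}\<close> coboundary_at_flip[OF subgroup_signed_perm[OF H j1(2)], of j1 a]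
        coboundary_at_flip[OF subgroup_signed_perm[OF H j2(2)], of j2 a]
      by (auto simp: block_cocycle_def)
    then show False
      by presburger
  qed
qed

definition flipper :: "(int \<Rightarrow> int) set \<Rightarrow> int \<Rightarrow> int \<Rightarrow> int" where
  "flipper H i = (SOME s. s \<in> H \<and> s i = - i)"

lemma flipper: "flipped H i \<Longrightarrow> flipper H i \<in> H \<and> flipper H i i = - i"
  unfolding flipped_def flipper_def using someI_ex[of "\<lambda>s. s \<in> H \<and> s i = - i"] by blast

locale cocycle =
  fixes m :: nat and H :: "(int \<Rightarrow> int) set" and c :: "(int \<Rightarrow> int) \<Rightarrow> int \<Rightarrow> int"
  assumes subgroup: "sp_subgroup m H" and in_WD: "H \<subseteq> WD m"
    and in_lattice: "\<And>g. g \<in> H \<Longrightarrow> c g \<in> lattice m"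
    and cocycle: "\<And>g h. g \<in> H \<Longrightarrow> h \<in> H \<Longrightarrow> c (h \<circ> g) = (\<lambda>j. c g j + Phi m g (c h) j)"
begin

lemma member_signed_perm: "h \<in> H \<Longrightarrow> signed_perm m h"
  by (rule subgroup_signed_perm[OF subgroup])

lemma cocycle_apply: "g \<in> H \<Longrightarrow> h \<in> H \<Longrightarrow> c (h \<circ> g) j = c g j + Phi m g (c h) j"
  using cocycle by simp

lemma minus_one: "h \<in> H \<Longrightarrow> c h (-1) = 0"
  by (rule additive_on_subgroup_vanishes[OF subgroup, where \<phi> = "\<lambda>f. c f (-1)"])
    (simp_all add: cocycle_apply Phi_minus_one[OF member_signed_perm])

lemma outside: "h \<in> H \<Longrightarrow> j \<notin> {-1..int m} \<Longrightarrow> c h j = 0"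
  using in_lattice by (auto simp: lattice_def)

lemma comp_pos:
  assumes "g \<in> H" "h \<in> H" "i \<in> {1..int m}"
  shows "c (h \<circ> g) i = c g i + sgn (g i) * c h \<bar>g i\<bar>"
  using assms cocycle_apply[of g h i] signed_perm_nonzero[OF member_signed_perm, of g i]
  by (auto simp: Phi_pos[OF member_signed_perm] minus_one sgn_if abs_if)

lemma stabilizer: "w \<in> H \<Longrightarrow> r \<in> {1..int m} \<Longrightarrow> w r = r \<Longrightarrow> c w r = 0"
  by (rule additive_on_stabilizer_vanishes[OF subgroup, where \<phi> = "\<lambda>f. c f r"])
    (simp_all add: comp_pos)

text \<open>If c were the coboundary of a vector a with a(-1) = A, then potential A i would be
  2 a(i) + A; the definition reads this value off at an element flipping i, or else at the
  representative of the orbit of i.\<close>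

definition potential :: "int \<Rightarrow> int \<Rightarrow> int" where
  "potential A i = (if flipped H i then - c (flipper H i) i
     else orbit_sign H i * (2 * c (transporter H i) (orbit_rep H i) + A))"

lemma potential_coboundary_flipped:
  assumes h: "h \<in> H" and i: "i \<in> {1..int m}" and "flipped H i"
  shows "2 * c h i = sgn (h i) * potential A \<bar>h i\<bar> - potential A i"
proof -
  define k where "k = \<bar>h i\<bar>"
  define si where "si = flipper H i"
  define sk where "sk = flipper H k"
  have k: "k \<in> {1..int m}" and "flipped H k"
    unfolding k_def using signed_perm_abs_mem[OF member_signed_perm[OF h] i]
      flipped_move[OF subgroup h] i \<open>flipped H i\<close>
    by auto
  have si: "si \<in> H" "si i = - i" and sk: "sk \<in> H" "sk k = - k"
    unfolding si_def sk_def using flipper \<open>flipped H i\<close> \<open>flipped H k\<close> by auto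
  have "(h \<circ> si) i = - h i" "(sk \<circ> h) i = - h i"
    using si(2) sk(2) signed_perm_minus[OF member_signed_perm[OF h], of i]
      signed_perm_minus[OF member_signed_perm[OF sk(1)], of "h i"]
    unfolding k_def by (auto split: if_splits)
  define w where "w = inv (sk \<circ> h) \<circ> (h \<circ> si)"
  have hsk: "sk \<circ> h \<in> H" and hsi: "h \<circ> si \<in> H"
    using subgroup_comp[OF subgroup] h si sk by auto
  have "w \<in> H"
    unfolding w_def using subgroup_comp[OF subgroup subgroup_inv[OF subgroup hsk] hsi] .
  moreover have "w i = i"
    unfolding w_def using signed_perm_inv_apply[OF member_signed_perm[OF hsk], of i]
      \<open>(h \<circ> si) i = - h i\<close> \<open>(sk \<circ> h) i = - h i\<close>
    by simp
  ultimately have w: "w \<in> H" "w i = i" by auto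
  have "h \<circ> si = (sk \<circ> h) \<circ> w"
    unfolding w_def using signed_perm_comp_inv[OF member_signed_perm[OF hsk]] by (simp add: o_assoc)
  moreover have "sgn i = 1" "\<bar>i\<bar> = i"
    using i by auto
  ultimately have "c (h \<circ> si) i = c (sk \<circ> h) i"
    using comp_pos[OF w(1) hsk i] w stabilizer[OF w(1) i] by simp
  then show ?thesis
    using comp_pos[OF si(1) h i] comp_pos[OF h sk(1) i] si(2) i \<open>flipped H i\<close> \<open>flipped H k\<close>
    unfolding potential_def si_def sk_def k_def by simp
qed

lemma potential_coboundary_unflipped:
  assumes h: "h \<in> H" and i: "i \<in> {1..int m}" and "\<not> flipped H i"
  shows "2 * c h i = sgn (h i) * potential A \<bar>h i\<bar> - potential A i"
proof -
  define k where "k = \<bar>h i\<bar>"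
  define r where "r = orbit_rep H i"
  define gi where "gi = transporter H i"
  define gk where "gk = transporter H k"
  define w where "w = inv gk \<circ> (h \<circ> gi)"
  have k: "k \<in> {1..int m}" and "\<not> flipped H k"
    unfolding k_def using signed_perm_abs_mem[OF member_signed_perm[OF h] i]
      flipped_move[OF subgroup h] i \<open>\<not> flipped H i\<close>
    by auto
  have r: "r \<in> {1..int m}" "orbit_rep H k = r"
    unfolding r_def k_def using orbit_rep_mem[OF subgroup i] orbit_rep_move[OF subgroup h] by auto
  have gi: "gi \<in> H" "gi r = orbit_sign H i * i" and gk: "gk \<in> H"
    unfolding gi_def gk_def r_def
    using transporter(1)[OF subgroup i] transporter_apply[OF subgroup i]
      transporter(1)[OF subgroup k]
    by auto
  have w: "w \<in> H" "w r = r"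
    using subgroup_comp[OF subgroup subgroup_inv[OF subgroup gk] subgroup_comp[OF subgroup h gi(1)]]
      unflipped_transport(1)[OF subgroup i \<open>\<not> flipped H i\<close> h]
    unfolding w_def r_def gi_def gk_def k_def by auto
  have si: "orbit_sign H i = 1 \<or> orbit_sign H i = -1"
    using orbit_sign_cases[OF subgroup i] .
  have "h \<circ> gi = gk \<circ> w"
    unfolding w_def using signed_perm_comp_inv[OF member_signed_perm[OF gk]] by (simp add: o_assoc)
  then have "c gk r = c gi r + orbit_sign H i * c h i"
    using comp_pos[OF gi(1) h r(1)] comp_pos[OF w(1) gk r(1)] w stabilizer[OF w(1) r(1)] gi(2)
      r(1) i si
    by (auto simp: abs_mult)
  moreover have "orbit_sign H k = orbit_sign H i * sgn (h i)"
    unfolding k_def by (rule unflipped_transport(2)[OF subgroup i \<open>\<not> flipped H i\<close> h])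
  moreover have "sgn (h i) * sgn (h i) = 1"
    using signed_perm_nonzero[OF member_signed_perm[OF h] i] by (simp add: sgn_if)
  ultimately show ?thesis
    using \<open>\<not> flipped H i\<close> \<open>\<not> flipped H k\<close> r(2) si
    unfolding potential_def k_def[symmetric] gk_def[symmetric] gi_def[symmetric] r_def[symmetric]
    by (auto simp: algebra_simps)
qed

lemma potential_coboundary:
  "h \<in> H \<Longrightarrow> i \<in> {1..int m} \<Longrightarrow> 2 * c h i = sgn (h i) * potential A \<bar>h i\<bar> - potential A i"
  using potential_coboundary_flipped potential_coboundary_unflipped by blast

lemma potential_parity:
  assumes "\<not> flipped H i" and "i \<in> {1..int m}"
  shows "even (potential A i - A)"
  using assms orbit_sign_cases[OF subgroup assms(2)] by (auto simp: potential_def)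

lemma potential_flipped: "flipped H i \<Longrightarrow> potential A i = potential A' i"
  by (simp add: potential_def)

definition double_primitive :: "int \<Rightarrow> int \<Rightarrow> int" where
  "double_primitive A j =
     (if j = -1 then 2 * A else if j \<in> {1..int m} then potential A j - A else 0)"

lemma double_primitive_nonzero:
  assumes h: "h \<in> H" and "j \<noteq> 0"
  shows "Phi m h (double_primitive A) j - double_primitive A j = 2 * c h j"
proof -
  consider "j = -1" | "j \<in> {1..int m}" | "j \<notin> {-1..int m}"
    using \<open>j \<noteq> 0\<close> by fastforce
  then show ?thesis
  proof cases
    case 1
    then show ?thesis by (simp add: Phi_minus_one[OF member_signed_perm[OF h]] minus_one[OF h])
  next
    case 2
    have "\<bar>h j\<bar> \<in> {1..int m}"
      using signed_perm_abs_mem[OF member_signed_perm[OF h] 2] .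
    then show ?thesis
      using 2 potential_coboundary[OF h 2, of A]
      by (auto simp: Phi_pos[OF member_signed_perm[OF h]] double_primitive_def abs_if sgn_if)
  next
    case 3
    then show ?thesis
      by (auto simp: Phi_outside[OF member_signed_perm[OF h]] outside[OF h] double_primitive_def)
  qed
qed

text \<open>At the coordinate 0 the defect is additive in h, so averaging over H kills it.\<close>

lemma double_primitive_zero:
  assumes "h \<in> H"
  shows "Phi m h (double_primitive A) 0 - double_primitive A 0 = 2 * c h 0"
proof -
  let ?D = "double_primitive A"
  have "2 * c h 0 - (Phi m h ?D 0 - ?D 0) = 0"
  proof (rule additive_on_subgroup_vanishes[OF subgroup _ assms,
        where \<phi> = "\<lambda>f. 2 * c f 0 - (Phi m f ?D 0 - ?D 0)"])
    fix f g assume f: "f \<in> H" and g: "g \<in> H"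
    define T where "T = int (tcount m g div 2)"
    define S where "S x = (\<Sum>i\<in>{1..int m}. if inv g i < 0 then x i else 0)" for x :: "int \<Rightarrow> int"
    have "S (Phi m f ?D) = (\<Sum>i\<in>{1..int m}. (if inv g i < 0 then ?D i else 0)
        + 2 * (if inv g i < 0 then c f i else 0))"
      unfolding S_def using double_primitive_nonzero[OF f, of _ A]
      by (intro sum.cong) (auto simp: algebra_simps)
    then have S: "S (Phi m f ?D) = S ?D + 2 * S (c f)"
      unfolding S_def by (simp add: sum.distrib sum_distrib_left)
    have "Phi m (f \<circ> g) ?D 0 = Phi m f ?D 0 + 2 * A * T + S ?D + 2 * S (c f)"
      using Phi_comp[OF subsetD[OF in_WD g] subsetD[OF in_WD f]]
        Phi_zero[OF member_signed_perm[OF g], of "Phi m f ?D"] S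
        Phi_minus_one[OF member_signed_perm[OF f], of ?D]
      unfolding T_def S_def by (auto simp: double_primitive_def)
    moreover have "Phi m g ?D 0 = ?D 0 + 2 * A * T + S ?D"
      using Phi_zero[OF member_signed_perm[OF g], of ?D] unfolding T_def S_def
      by (simp add: double_primitive_def)
    moreover have "c (f \<circ> g) 0 = c g 0 + c f 0 + S (c f)"
      using cocycle_apply[OF g f, of 0] Phi_zero[OF member_signed_perm[OF g], of "c f"]
        minus_one[OF f]
      unfolding S_def by simp
    ultimately show "2 * c (f \<circ> g) 0 - (Phi m (f \<circ> g) ?D 0 - ?D 0) =
        (2 * c g 0 - (Phi m g ?D 0 - ?D 0)) + (2 * c f 0 - (Phi m f ?D 0 - ?D 0))"
      by (simp add: algebra_simps)
  qed
  then show ?thesis by simp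
qed

lemma double_primitive_coboundary:
  "h \<in> H \<Longrightarrow> Phi m h (double_primitive A) j - double_primitive A j = 2 * c h j"
  using double_primitive_nonzero double_primitive_zero by (cases "j = 0") auto

lemma coboundary_if_potential_parity:
  assumes "\<forall>i\<in>{1..int m}. even (potential A i - A)"
  shows "\<exists>a\<in>lattice m. \<forall>g\<in>H. c g = (\<lambda>j. Phi m g a j - a j)"
proof -
  define a where "a j = double_primitive A j div 2" for j
  have double: "double_primitive A = (\<lambda>j. 2 * a j)"
    using assms by (auto simp: a_def double_primitive_def fun_eq_iff)
  have "a \<in> lattice m"
    by (auto simp: lattice_def a_def double_primitive_def)
  moreover have "c g = (\<lambda>j. Phi m g a j - a j)" if "g \<in> H" for g
  proof
    fix j
    have "2 * Phi m g a j - 2 * a j = 2 * c g j"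
      using double_primitive_coboundary[OF that, of A j] unfolding double Phi_scale .
    then show "c g j = Phi m g a j - a j"
      by simp
  qed
  ultimately show ?thesis by blast
qed

lemma odd_potential_even_block: "even_block m H {i \<in> {1..int m}. odd (potential 0 i)}"
  unfolding even_block_def
proof (intro conjI ballI)
  let ?U = "{i \<in> {1..int m}. odd (potential 0 i)}"
  show "?U \<subseteq> {1..int m}" by blast
  fix h assume h: "h \<in> H"
  show "abs_stable h ?U"
    unfolding abs_stable_def
  proof
    fix i assume "i \<in> ?U"
    then have i: "i \<in> {1..int m}" and "odd (potential 0 i)" by auto
    moreover have "sgn (h i) * potential 0 \<bar>h i\<bar> = 2 * c h i + potential 0 i"
      using potential_coboundary[OF h i, of 0] by simp
    ultimately have "odd (sgn (h i) * potential 0 \<bar>h i\<bar>)"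
      by simp
    then show "\<bar>h i\<bar> \<in> ?U"
      using signed_perm_abs_mem[OF member_signed_perm[OF h] i] by simp
  qed
  have hinv: "inv h \<in> H" "inv (inv h) = h"
    using subgroup_inv[OF subgroup h] inv_inv_eq[OF signed_perm_bij[OF member_signed_perm[OF h]]]
      by auto
  have "(\<Sum>i\<in>{1..int m}. if h i < 0 then potential 0 i else 0) = 2 * c (inv h) 0"
    using double_primitive_zero[OF hinv(1), of 0]
      Phi_zero[OF member_signed_perm[OF hinv(1)], of "double_primitive 0"]
    by (simp add: hinv(2) double_primitive_def cong: if_cong)
  then have "even (card {i \<in> {1..int m}. odd (if h i < 0 then potential 0 i else 0)})"
    using even_sum_iff[of "{1..int m}" "\<lambda>i. if h i < 0 then potential 0 i else 0"] by simp
  moreover have "{i \<in> {1..int m}. odd (if h i < 0 then potential 0 i else 0)}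
      = {i \<in> ?U. odd (if h i < 0 then 1 else 0 :: int)}"
    by auto
  moreover have "finite ?U"
    by (rule finite_subset[of _ "{1..int m}"]) auto
  ultimately show "even (neg_count ?U h)"
    unfolding neg_count_def using even_sum_iff[of ?U "\<lambda>i. if h i < 0 then 1 else 0 :: int"]
    by simp
qed

text \<open>On flipped symbols the potential does not depend on A, on the others its parity is that
  of A. Separation for the block where potential 0 is odd makes A = 0 or A = 1 work.\<close>

lemma coboundary_if_flip_separated:
  assumes "flip_separated m H"
  shows "\<exists>a\<in>lattice m. \<forall>g\<in>H. c g = (\<lambda>j. Phi m g a j - a j)"
proof -
  let ?U = "{i \<in> {1..int m}. odd (potential 0 i)}"
  have "(\<forall>j\<in>?U. \<not> flipped H j) \<or> (\<forall>j\<in>{1..int m} - ?U. \<not> flipped H j)"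
    using assms odd_potential_even_block unfolding flip_separated_def by blast
  then show ?thesis
  proof
    assume "\<forall>j\<in>?U. \<not> flipped H j"
    then have "\<forall>i\<in>{1..int m}. even (potential 0 i - 0)"
      using potential_parity by auto
    then show ?thesis by (rule coboundary_if_potential_parity)
  next
    assume "\<forall>j\<in>{1..int m} - ?U. \<not> flipped H j"
    have "even (potential 1 i - 1)" if "i \<in> {1..int m}" for i
    proof (cases "flipped H i")
      case True
      then have "odd (potential 0 i)"
        using \<open>\<forall>j\<in>{1..int m} - ?U. \<not> flipped H j\<close> that by blast
      then show ?thesis
        using potential_flipped[OF True, of 1 0] by simp
    qed (use potential_parity that in blast)
    then have "\<forall>i\<in>{1..int m}. even (potential 1 i - 1)" ..
    then show ?thesis by (rule coboundary_if_potential_parity)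
  qed
qed

end

lemma flip_separated_imp_H1_vanishes:
  assumes "sp_subgroup m H" and "H \<subseteq> WD m" and "flip_separated m H"
  shows "H1_vanishes m H"
  unfolding H1_vanishes_def
proof (intro allI impI)
  fix c assume "(\<forall>g\<in>H. c g \<in> lattice m) \<and>
      (\<forall>g\<in>H. \<forall>h\<in>H. c (h \<circ> g) = (\<lambda>j. c g j + Phi m g (c h) j))"
  then interpret cocycle m H c
    using assms by unfold_locales auto
  show "\<exists>a\<in>lattice m. \<forall>g\<in>H. c g = (\<lambda>j. Phi m g a j - a j)"
    using coboundary_if_flip_separated[OF assms(3)] .
qed

theorem H1_vanishes_iff_flip_separated:
  "sp_subgroup m H \<Longrightarrow> H \<subseteq> WD m \<Longrightarrow> H1_vanishes m H \<longleftrightarrow> flip_separated m H"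
  using H1_vanishes_imp_flip_separated flip_separated_imp_H1_vanishes by blast

section \<open>Relative minimality\<close>

lemma Kvec_apply:
  "Kvec m j = (if j = -1 then -2 else if j = 0 then -2 else if j \<in> {1..int m} then 1 else 0)"
  by (simp add: Kvec_def lb_def)

lemma Phi_lb_zero: "signed_perm m g \<Longrightarrow> Phi m g (lb 0) = lb 0"
  using signed_perm_nonzero[of m g] by (auto simp: fun_eq_iff Phi_apply lb_def intro!: sum.neutral)

lemma Phi_Kvec:
  assumes g: "g \<in> WD m"
  shows "Phi m g (Kvec m) = Kvec m"
proof
  fix j
  have g': "signed_perm m g"
    using WD_signed_perm[OF g] .
  have "(\<Sum>i\<in>{1..int m}. if inv g i < 0 then Kvec m i else 0) = neg_count {1..int m} (inv g)"
    unfolding neg_count_def by (intro sum.cong) (auto simp: Kvec_apply)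
  also have "\<dots> = int (tcount m g)"
    using neg_count_inv[OF g' order_refl abs_stable_full[OF g']] tcount_eq_neg_count by simp
  also have "\<dots> = 2 * int (tcount m g div 2)"
    using WD_even[OF g] by (auto elim!: evenE)
  finally have "(\<Sum>i\<in>{1..int m}. if inv g i < 0 then Kvec m i else 0) = 2 * int (tcount m g div 2)" .
  then show "Phi m g (Kvec m) j = Kvec m j"
    using signed_perm_abs_mem[OF g', of j]
    by (auto simp: Phi_apply[OF g'] Kvec_apply abs_if split: if_splits)
qed

lemma rel_minimal_if_all_flipped:
  assumes "m \<ge> 1" and H: "H \<subseteq> WD m" and flips: "\<forall>j\<in>{1..int m}. flipped H j"
  shows "rel_minimal m H"
  unfolding rel_minimal_def
proof (intro equalityI subsetI)
  fix x assume "x \<in> {x \<in> lattice m. \<forall>g\<in>H. Phi m g x = x}"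
  then have x: "x \<in> lattice m" and fixed: "\<And>g. g \<in> H \<Longrightarrow> Phi m g x = x"
    by auto
  have minus_one: "x (-1) = -2 * x j" if j: "j \<in> {1..int m}" for j
  proof -
    obtain h where h: "h \<in> H" "h j = - j"
      using flips j unfolding flipped_def by blast
    then show ?thesis
      using fixed[OF h(1)] Phi_pos[OF WD_signed_perm, of h m j x] H j by (auto simp: fun_eq_iff)
  qed
  define b where "b = x 1"
  have "x = (\<lambda>j. (x 0 + 2 * b) * lb 0 j + b * Kvec m j)"
    using x minus_one[of 1] minus_one \<open>m \<ge> 1\<close>
    by (auto simp: fun_eq_iff lattice_def lb_def Kvec_apply b_def)
  then show "x \<in> {\<lambda>j. a * lb 0 j + b * Kvec m j |a b. True}"
    by blast
next
  fix v assume "v \<in> {\<lambda>j. a * lb 0 j + b * Kvec m j |a b. True}"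
  then obtain a b where v: "v = (\<lambda>j. a * lb 0 j + b * Kvec m j)"
    by blast
  have "Phi m g v = v" if "g \<in> H" for g
    using that H Phi_lb_zero[OF WD_signed_perm] Phi_Kvec
    unfolding v by (auto simp: fun_eq_iff Phi_linear)
  moreover have "v \<in> lattice m"
    by (auto simp: v lattice_def lb_def Kvec_apply)
  ultimately show "v \<in> {x \<in> lattice m. \<forall>g\<in>H. Phi m g x = x}"
    by blast
qed

section \<open>Restriction to an orbit\<close>

definition flip_last :: "nat \<Rightarrow> int \<Rightarrow> int" where
  "flip_last n' = (\<lambda>x. if \<bar>x\<bar> = int n' + 1 then - x else x)"

lemma signed_perm_flip_last: "signed_perm (n' + 1) (flip_last n')"
proof -
  have "flip_last n' = transpose (int n' + 1) (- (int n' + 1))"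
    by (auto simp: flip_last_def transpose_def fun_eq_iff)
  then have "flip_last n' permutes ({- int (n' + 1)..int (n' + 1)} - {0})"
    by (simp add: permutes_swap_id)
  then show ?thesis
    by (simp add: signed_perm_def flip_last_def)
qed

lemma flip_last_flip_last: "flip_last n' \<circ> flip_last n' = id"
  by (auto simp: flip_last_def fun_eq_iff)

locale orbit_restriction =
  fixes n n' :: nat and G :: "(int \<Rightarrow> int) set"
  assumes subgroup: "sp_subgroup n G" and in_WD: "G \<subseteq> WD n" and le: "n' \<le> n"
    and orbit_stable: "\<And>g. g \<in> G \<Longrightarrow> abs_stable g {1..int n'}"
begin

lemma member_signed_perm: "g \<in> G \<Longrightarrow> signed_perm n g"
  by (rule subgroup_signed_perm[OF subgroup])

lemma abs_mem_orbit_iff: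
  assumes g: "g \<in> G"
  shows "\<bar>g x\<bar> \<in> {1..int n'} \<longleftrightarrow> \<bar>x\<bar> \<in> {1..int n'}"
proof (cases "\<bar>x\<bar> \<in> {1..int n}")
  case True
  then show ?thesis
    using abs_stable_iff[OF member_signed_perm[OF g] _ orbit_stable[OF g] True] le
      signed_perm_abs_abs[OF member_signed_perm[OF g]]
    by auto
next
  case False
  then have "x \<notin> {- int n..int n} - {0}"
    by auto
  then have "g x = x"
    using permutes_not_in[OF signed_perm_permutes[OF member_signed_perm[OF g]]] by blast
  then show ?thesis by simp
qed

lemma gO_comp: "f \<in> G \<Longrightarrow> g \<in> G \<Longrightarrow> gO n' (f \<circ> g) = gO n' f \<circ> gO n' g"
  using abs_mem_orbit_iff by (auto simp: gO_def fun_eq_iff)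

lemma signed_perm_gO:
  assumes g: "g \<in> G"
  shows "signed_perm n' (gO n' g)"
proof -
  define S where "S = {- int n'..int n'} - {0}"
  have S: "x \<in> S \<longleftrightarrow> \<bar>x\<bar> \<in> {1..int n'}" for x
    unfolding S_def by auto
  have ig: "inv g \<in> G"
    using subgroup_inv[OF subgroup g] .
  have "bij_betw (gO n' g) S S"
  proof (rule bij_betw_byWitness[where f' = "gO n' (inv g)"])
    show "\<forall>a\<in>S. gO n' (inv g) (gO n' g a) = a"
      using abs_mem_orbit_iff[OF g] signed_perm_inv_apply[OF member_signed_perm[OF g]]
      by (auto simp: gO_def S)
    show "\<forall>a\<in>S. gO n' g (gO n' (inv g) a) = a"
      using abs_mem_orbit_iff[OF ig] signed_perm_apply_inv[OF member_signed_perm[OF g]]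
      by (auto simp: gO_def S)
    show "gO n' g ` S \<subseteq> S" "gO n' (inv g) ` S \<subseteq> S"
      using abs_mem_orbit_iff[OF g] abs_mem_orbit_iff[OF ig] by (auto simp: gO_def S)
  qed
  moreover have "x \<notin> S \<Longrightarrow> gO n' g x = x" for x
    by (auto simp: gO_def S)
  ultimately have "gO n' g permutes S"
    by (rule bij_imp_permutes)
  then show ?thesis
    using signed_perm_minus[OF member_signed_perm[OF g]] by (simp add: signed_perm_def gO_def S_def)
qed

lemma tcount_gO: "int (tcount n' (gO n' g)) = neg_count {1..int n'} g"
  unfolding tcount_eq_neg_count neg_count_def by (rule sum.cong) (auto simp: gO_def)

lemma sgn_char_gO: "sgn_char n' (gO n' g) = (if even (neg_count {1..int n'} g) then 1 else -1)"
proof -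
  have "even (tcount n' (gO n' g)) \<longleftrightarrow> even (neg_count {1..int n'} g)"
    using tcount_gO[of g] by (metis even_of_nat)
  then show ?thesis
    by (simp add: sgn_char_def minus_one_power_iff)
qed

lemma PO_eq:
  "PO n' g = (if even (neg_count {1..int n'} g) then gO n' g else gO n' g \<circ> flip_last n')"
  unfolding PO_def sgn_char_gO by (auto simp: fun_eq_iff flip_last_def gO_def)

lemma gO_flip_last:
  assumes "g \<in> G"
  shows "gO n' g \<circ> flip_last n' = flip_last n' \<circ> gO n' g"
proof
  fix x
  show "(gO n' g \<circ> flip_last n') x = (flip_last n' \<circ> gO n' g) x"
  proof (cases "\<bar>x\<bar> \<in> {1..int n'}")
    case True
    then have "\<bar>g x\<bar> \<in> {1..int n'}"
      using abs_mem_orbit_iff[OF assms] by simp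
    then show ?thesis
      using True by (auto simp: gO_def flip_last_def)
  qed (auto simp: gO_def flip_last_def)
qed

lemma even_neg_count_orbit_comp:
  assumes "f \<in> G" "g \<in> G"
  shows "even (neg_count {1..int n'} (f \<circ> g)) \<longleftrightarrow>
    (even (neg_count {1..int n'} f) \<longleftrightarrow> even (neg_count {1..int n'} g))"
  using neg_count_comp[OF member_signed_perm[OF assms(2)] member_signed_perm[OF assms(1)] _
      orbit_stable[OF assms(2)]] le
  by auto

lemma PO_comp:
  assumes f: "f \<in> G" and g: "g \<in> G"
  shows "PO n' (f \<circ> g) = PO n' f \<circ> PO n' g"
  unfolding PO_eq even_neg_count_orbit_comp[OF f g] gO_comp[OF f g]
  using gO_flip_last[OF g] flip_last_flip_last[of n']
  by (auto simp: comp_assoc) (metis comp_assoc comp_id)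

lemma PO_id: "PO n' id = id"
  by (simp add: PO_eq gO_def neg_count_def fun_eq_iff)

lemma signed_perm_PO: "g \<in> G \<Longrightarrow> signed_perm (n' + 1) (PO n' g)"
  using signed_perm_mono[OF signed_perm_gO, of g "n' + 1"] signed_perm_flip_last[of n']
  by (auto simp: PO_eq intro: signed_perm_comp)

lemma PO_inv:
  assumes f: "f \<in> G"
  shows "PO n' (inv f) = inv (PO n' f)"
proof -
  have "PO n' f \<circ> PO n' (inv f) = id"
    using PO_comp[OF f subgroup_inv[OF subgroup f]]
      signed_perm_comp_inv[OF member_signed_perm[OF f]] PO_id by simp
  then show ?thesis
    using signed_perm_bij[OF signed_perm_PO[OF f]]
    by (metis bij_is_inj comp_assoc comp_id inv_o_cancel id_comp)
qed

lemma PO_orbit: "i \<in> {1..int n'} \<Longrightarrow> PO n' g i = g i"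
  by (auto simp: PO_def gO_def)

lemma PO_last:
  "PO n' g (int n' + 1) = (if even (neg_count {1..int n'} g) then int n' + 1 else - (int n' + 1))"
  by (simp add: PO_eq gO_def flip_last_def)

lemma neg_count_PO: "U \<subseteq> {1..int n'} \<Longrightarrow> neg_count U (PO n' g) = neg_count U g"
  unfolding neg_count_def by (rule sum.cong) (auto simp: PO_orbit)

definition target_rank :: nat where
  "target_rank = (if \<forall>g\<in>G. even (neg_count {1..int n'} g) then n' else n' + 1)"

lemma target_rank_range: "{1..int target_rank} \<subseteq> {1..int n'} \<union> {int n' + 1}"
  by (auto simp: target_rank_def)

lemma last_in_target_rank:
  "int n' + 1 \<in> {1..int target_rank} \<longleftrightarrow> (\<exists>g\<in>G. odd (neg_count {1..int n'} g))"
  by (auto simp: target_rank_def)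

lemma PO_in_WD:
  assumes g: "g \<in> G"
  shows "PO n' g \<in> WD target_rank"
proof (cases "\<forall>g\<in>G. even (neg_count {1..int n'} g)")
  case True
  then have "PO n' g = gO n' g" and "even (int (tcount n' (gO n' g)))"
    using g by (simp_all add: PO_eq tcount_gO)
  then show ?thesis
    using True signed_perm_gO[OF g] by (simp add: target_rank_def WD_iff)
next
  case False
  have "{1..int n' + 1} = {1..int n'} \<union> {int n' + 1}" by auto
  then have "neg_count {1..int n' + 1} (PO n' g)
      = neg_count {1..int n'} g + (if PO n' g (int n' + 1) < 0 then 1 else 0)"
    using neg_count_union[of "{1..int n'}" "{int n' + 1}" "PO n' g"]
      neg_count_PO[of "{1..int n'}" g]
    by (simp add: neg_count_def)
  moreover have "int (tcount (n' + 1) (PO n' g)) = neg_count {1..int n' + 1} (PO n' g)"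
    using tcount_eq_neg_count[of "n' + 1" "PO n' g"] by (simp add: add.commute)
  ultimately have "even (int (tcount (n' + 1) (PO n' g)))"
    by (auto simp: PO_last)
  moreover have "target_rank = n' + 1"
    using False by (simp add: target_rank_def)
  ultimately show ?thesis
    using signed_perm_PO[OF g] by (simp add: WD_iff)
qed

lemma flipped_PO_orbit: "j \<in> {1..int n'} \<Longrightarrow> flipped (PO n' ` H) j \<longleftrightarrow> flipped H j"
  by (auto simp: flipped_def PO_orbit)

lemma flipped_PO_last:
  "flipped (PO n' ` H) (int n' + 1) \<longleftrightarrow> (\<exists>h\<in>H. odd (neg_count {1..int n'} h))"
  by (auto simp: flipped_def PO_last)

lemma rel_minimal_PO:
  assumes "n' \<ge> 1" and flips: "\<forall>j\<in>{1..int n}. flipped G j"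
  shows "rel_minimal target_rank (PO n' ` G)"
proof (rule rel_minimal_if_all_flipped)
  show "target_rank \<ge> 1"
    using \<open>n' \<ge> 1\<close> by (simp add: target_rank_def)
  show "PO n' ` G \<subseteq> WD target_rank"
    using PO_in_WD by blast
  show "\<forall>j\<in>{1..int target_rank}. flipped (PO n' ` G) j"
  proof
    fix j assume j: "j \<in> {1..int target_rank}"
    show "flipped (PO n' ` G) j"
    proof (cases "j \<in> {1..int n'}")
      case True
      then show ?thesis
        using flips le flipped_PO_orbit by auto
    next
      case False
      then have "j = int n' + 1"
        using j target_rank_range by blast
      then show ?thesis
        using j last_in_target_rank flipped_PO_last[of G] by auto
    qed
  qed
qed

lemma subgroup_preimage:
  assumes Hb: "sp_subgroup N' Hb" and "Hb \<subseteq> PO n' ` G"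
  shows "sp_subgroup n {g \<in> G. PO n' g \<in> Hb}" and "PO n' ` {g \<in> G. PO n' g \<in> Hb} = Hb"
proof -
  show "sp_subgroup n {g \<in> G. PO n' g \<in> Hb}"
    unfolding sp_subgroup_def
    using subgroup subgroup_id[OF Hb] subgroup_comp[OF Hb] subgroup_inv[OF Hb]
      PO_id PO_comp PO_inv
    by (auto simp: sp_subgroup_def)
  show "PO n' ` {g \<in> G. PO n' g \<in> Hb} = Hb"
    using \<open>Hb \<subseteq> PO n' ` G\<close> by auto
qed

lemma abs_stable_tail:
  assumes g: "g \<in> G"
  shows "abs_stable g {int n' + 1..int n}"
  unfolding abs_stable_def
proof
  fix i assume "i \<in> {int n' + 1..int n}"
  then have "i \<in> {1..int n}" "i \<notin> {1..int n'}"
    by auto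
  then show "\<bar>g i\<bar> \<in> {int n' + 1..int n}"
    using abs_stable_iff[OF member_signed_perm[OF g] _ orbit_stable[OF g], of i]
      signed_perm_abs_mem[OF member_signed_perm[OF g], of i] le
    by auto
qed

lemma neg_count_orbit_tail:
  "neg_count {1..int n} g = neg_count {1..int n'} g + neg_count {int n' + 1..int n} g"
proof -
  have "{1..int n} = {1..int n'} \<union> {int n' + 1..int n}"
    using le by auto
  then show ?thesis
    by (simp add: neg_count_union)
qed

lemma even_neg_count: "g \<in> G \<Longrightarrow> even (neg_count {1..int n} g)"
  using WD_even[of g n] in_WD tcount_eq_neg_count[of n g] by (metis even_of_nat subsetD)

text \<open>P_O h changes the sign of n'+1 iff h changes an odd number of signs on the orbit, or
  equivalently (the total number being even) on the tail {n'+1..n}; so a block of P_O(H)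
  containing n'+1 lifts to a block of H containing the tail.\<close>

definition lift_block :: "int set \<Rightarrow> int set" where
  "lift_block Ub = Ub \<inter> {1..int n'} \<union> (if int n' + 1 \<in> Ub then {int n' + 1..int n} else {})"

context
  fixes H :: "(int \<Rightarrow> int) set"
  assumes H: "sp_subgroup n H" and HG: "H \<subseteq> G"
begin

lemma flipped_last_imp_flipped_tail:
  assumes "flipped (PO n' ` H) (int n' + 1)"
  shows "\<exists>j\<in>{int n' + 1..int n}. flipped H j"
proof (rule ccontr)
  assume unflipped: "\<not> ?thesis"
  obtain h where h: "h \<in> H" and "odd (neg_count {1..int n'} h)"
    using assms flipped_PO_last by blast
  moreover have "even (neg_count {int n' + 1..int n} h)"
    by (rule even_neg_count_if_unflipped[OF H _ _ _ h])
      (use abs_stable_tail HG unflipped in auto)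
  ultimately show False
    using even_neg_count[of h] neg_count_orbit_tail[of h] HG h by auto
qed

lemma even_block_lift_block:
  assumes "even_block target_rank (PO n' ` H) Ub"
  shows "even_block n H (lift_block Ub)"
proof -
  have Ub: "Ub \<subseteq> {1..int target_rank}" and stable: "\<And>h. h \<in> H \<Longrightarrow> abs_stable (PO n' h) Ub"
    and even: "\<And>h. h \<in> H \<Longrightarrow> even (neg_count Ub (PO n' h))"
    using assms by (auto simp: even_block_def)
  let ?U = "Ub \<inter> {1..int n'}" and ?T = "{int n' + 1..int n}"
  have "lift_block Ub \<subseteq> {1..int n}"
    using le by (auto simp: lift_block_def)
  moreover have "abs_stable h (lift_block Ub)" if h: "h \<in> H" for h
    using stable[OF h] orbit_stable abs_stable_tail HG h PO_orbit
    by (auto simp: lift_block_def abs_stable_def)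
  moreover have "even (neg_count (lift_block Ub) h)" if h: "h \<in> H" for h
  proof -
    have "Ub = ?U \<union> (Ub \<inter> {int n' + 1})"
      using Ub target_rank_range by auto
    then have "neg_count Ub (PO n' h) = neg_count (?U \<union> (Ub \<inter> {int n' + 1})) (PO n' h)"
      by (rule arg_cong)
    also have "\<dots> = neg_count ?U (PO n' h) + neg_count (Ub \<inter> {int n' + 1}) (PO n' h)"
      by (rule neg_count_union) auto
    finally have
      "neg_count Ub (PO n' h) = neg_count ?U (PO n' h) + neg_count (Ub \<inter> {int n' + 1}) (PO n' h)" .
    moreover have "neg_count (Ub \<inter> {int n' + 1}) (PO n' h)
        = (if int n' + 1 \<in> Ub \<and> odd (neg_count {1..int n'} h) then 1 else 0)"
      by (cases "int n' + 1 \<in> Ub") (auto simp: neg_count_def PO_last)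
    ultimately have "neg_count Ub (PO n' h)
        = neg_count ?U h + (if int n' + 1 \<in> Ub \<and> odd (neg_count {1..int n'} h) then 1 else 0)"
      using neg_count_PO[of ?U h] by simp
    moreover have "neg_count (lift_block Ub) h
        = neg_count ?U h + (if int n' + 1 \<in> Ub then neg_count ?T h else 0)"
    proof -
      have "?U \<inter> ?T = {}"
        by auto
      then show ?thesis
        using neg_count_union[of ?U ?T h] by (simp add: lift_block_def)
    qed
    moreover have "even (neg_count {1..int n'} h + neg_count ?T h)"
      using even_neg_count[of h] neg_count_orbit_tail[of h] HG h by auto
    ultimately show ?thesis
      using even[OF h] by auto
  qed
  ultimately show ?thesis
    by (simp add: even_block_def)
qed

lemma flip_separated_PO:
  assumes "flip_separated n H"
  shows "flip_separated target_rank (PO n' ` H)"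
  unfolding flip_separated_def
proof (intro allI impI)
  fix Ub assume block: "even_block target_rank (PO n' ` H) Ub"
  then have Ub: "Ub \<subseteq> {1..int n'} \<union> {int n' + 1}"
    using target_rank_range by (auto simp: even_block_def)
  have "(\<forall>j\<in>lift_block Ub. \<not> flipped H j) \<or> (\<forall>j\<in>{1..int n} - lift_block Ub. \<not> flipped H j)"
    using assms even_block_lift_block[OF block] unfolding flip_separated_def by blast
  moreover have "\<exists>j'\<in>lift_block Ub. flipped H j'" if j: "j \<in> Ub" "flipped (PO n' ` H) j" for j
  proof (cases "j \<in> {1..int n'}")
    case True
    then show ?thesis
      using j flipped_PO_orbit by (auto simp: lift_block_def)
  next
    case False
    then have "j = int n' + 1"
      using j Ub by blast
    then show ?thesis
      using j flipped_last_imp_flipped_tail by (auto simp: lift_block_def)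
  qed
  moreover have "\<exists>j'\<in>{1..int n} - lift_block Ub. flipped H j'"
    if j: "j \<in> {1..int target_rank} - Ub" "flipped (PO n' ` H) j" for j
  proof (cases "j \<in> {1..int n'}")
    case True
    then show ?thesis
      using j le flipped_PO_orbit by (auto simp: lift_block_def)
  next
    case False
    then have "j = int n' + 1"
      using j target_rank_range by blast
    then show ?thesis
      using j flipped_last_imp_flipped_tail by (auto simp: lift_block_def)
  qed
  ultimately show "(\<forall>j\<in>Ub. \<not> flipped (PO n' ` H) j) \<or>
      (\<forall>j\<in>{1..int target_rank} - Ub. \<not> flipped (PO n' ` H) j)"
    by blast
qed

end

lemma cond_H1_PO:
  assumes "cond_H1 n G"
  shows "cond_H1 target_rank (PO n' ` G)"
  unfolding cond_H1_def
proof (intro allI impI)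
  fix Hb assume "sp_subgroup target_rank Hb \<and> Hb \<subseteq> PO n' ` G"
  then have Hb: "sp_subgroup target_rank Hb" and "Hb \<subseteq> PO n' ` G"
    by auto
  define H where "H = {g \<in> G. PO n' g \<in> Hb}"
  have H: "sp_subgroup n H" and Hb_eq: "PO n' ` H = Hb"
    unfolding H_def using subgroup_preimage[OF Hb \<open>Hb \<subseteq> PO n' ` G\<close>] by auto
  have "H \<subseteq> G"
    unfolding H_def by blast
  then have "flip_separated n H"
    using assms H in_WD H1_vanishes_iff_flip_separated unfolding cond_H1_def by blast
  then have "flip_separated target_rank Hb"
    using flip_separated_PO[OF H \<open>H \<subseteq> G\<close>] Hb_eq by simp
  moreover have "Hb \<subseteq> WD target_rank"
    using \<open>Hb \<subseteq> PO n' ` G\<close> PO_in_WD by blast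
  ultimately show "H1_vanishes target_rank Hb"
    using H1_vanishes_iff_flip_separated[OF Hb] by blast
qed

end

theorem lemma6p2:
  fixes n n' :: nat and G :: "(int \<Rightarrow> int) set"
  assumes "n \<ge> 1"
    and "sp_subgroup n G" and "G \<subseteq> WD n"
    and "cond_H1 n G" and "rel_minimal n G" and "minimal n G"
    and "n' \<ge> 1" and "n' \<le> n" and "is_pr_orbit n G {1..int n'}"
  defines "N \<equiv> (if \<forall>g\<in>G. sgn_char n' (gO n' g) = 1 then n' else n' + 1)"
  shows "PO n' ` G \<subseteq> WD N \<and> rel_minimal N (PO n' ` G) \<and> cond_H1 N (PO n' ` G)"
proof -
  have "abs_stable g {1..int n'}" if "g \<in> G" for g
    using assms(9) that by (fastforce simp: is_pr_orbit_def abs_stable_def pr_def)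
  then interpret orbit_restriction n n' G
    using assms(2,3,8) by unfold_locales
  have "N = target_rank"
    unfolding N_def target_rank_def by (simp add: sgn_char_gO)
  moreover have "\<forall>j\<in>{1..int n}. flipped G j"
    using \<open>minimal n G\<close> by (simp add: minimal_def flipped_def)
  ultimately show ?thesis
    using PO_in_WD rel_minimal_PO[OF \<open>n' \<ge> 1\<close>] cond_H1_PO[OF \<open>cond_H1 n G\<close>] by blast
qed

end
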